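(* Let $k\ge2$ be an integer. For all $n\ge1$, \[ \mathbb E\Big[\Big(X_{k,1}(T_n)-\int_0^\infty a_n(t)\,dt\Big)^2\Big]=\mathbb E\Big[\int_0^\infty a_n(t)\,dt\Big]. \]
   Context: $\xi$ is an offspring law on $\{0,1,\dots\}$ with mean 1 and $0<\sum_{p\ge2}p(p-1)\xi(p)<\infty$; $T_n$ is a Galton--Watson tree with law $\xi$ conditioned to have $n$ vertices. Each vertex $v$ carries an independent rate-1 Poisson process $N_v$; $\eta_{v,r}=\inf\{t:N_v(t)=r\}$, and $v$ is removed at time $\eta_v=\eta_{v,k}$. $T_n(t)$ is the set of vertices $v$ such that neither $v$ nor any ancestor of $v$ has been removed by time $t$. A vertex $v$ is a $1$-record if $v$ is still connected to the root at time $\eta_{v,1}$ (i.e. $v\in T_n(\eta_{v,1})$), and $X_{k,1}(T_n)$ is the number of 1-records. $a_n(t)=\#\{v\in T_n(t):N_v(t)=0\}$. *)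

theory Defs
  imports "HOL-Probability.Probability" "HOL-Library.Sublist"
begin

(* Plane (ordered) rooted trees; vertices are Ulam--Harris words (nat lists),
   the root is [], and the ancestors of v are the prefixes of v. *)
datatype ptree = Node "ptree list"

fun tsize :: "ptree \<Rightarrow> nat" where
  "tsize (Node ts) = Suc (sum_list (map tsize ts))"

function verts :: "ptree \<Rightarrow> nat list set" where
  "verts (Node ts) = {[]} \<union> (\<Union>i<length ts. (Cons i) ` verts (ts ! i))"
  by pat_completeness auto
termination
  by (relation "Wellfounded.measure size") (auto simp: less_Suc_eq_le intro!: size_list_estimation' nth_mem)

fun gw_weight :: "nat pmf \<Rightarrow> ptree \<Rightarrow> real" where
  "gw_weight xi (Node ts) = pmf xi (length ts) * prod_list (map (gw_weight xi) ts)"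

definition cond_GW_expect :: "nat pmf \<Rightarrow> nat \<Rightarrow> (ptree \<Rightarrow> real) \<Rightarrow> real" where
  "cond_GW_expect xi n F =
     (\<Sum>t | tsize t = n. gw_weight xi t * F t) / (\<Sum>t | tsize t = n. gw_weight xi t)"

(* Rate-1 Poisson processes: omega (v,i) is the i-th interarrival time (i = 0,1,...)
   of the process N_v; all i.i.d. Exp(1). *)
definition exp1 :: "real measure" where
  "exp1 = density lborel (exponential_density 1)"

definition PP :: "(nat list \<times> nat \<Rightarrow> real) measure" where
  "PP = PiM UNIV (\<lambda>_. exp1)"

definition arrival :: "(nat list \<times> nat \<Rightarrow> real) \<Rightarrow> nat list \<Rightarrow> nat \<Rightarrow> real" where
  "arrival \<omega> v r = (\<Sum>i<r. \<omega> (v, i))"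

definition Ncount :: "(nat list \<times> nat \<Rightarrow> real) \<Rightarrow> nat list \<Rightarrow> real \<Rightarrow> nat" where
  "Ncount \<omega> v t = card {r. 1 \<le> r \<and> arrival \<omega> v r \<le> t}"

definition eta :: "(nat list \<times> nat \<Rightarrow> real) \<Rightarrow> nat list \<Rightarrow> nat \<Rightarrow> real" where
  "eta \<omega> v r = Inf {t. Ncount \<omega> v t = r}"

(* T_n(s): vertices v such that neither v nor any ancestor has been removed by time s;
   vertex u is removed at time eta_{u,k} *)
definition alive :: "nat \<Rightarrow> ptree \<Rightarrow> (nat list \<times> nat \<Rightarrow> real) \<Rightarrow> real \<Rightarrow> nat list set" where
  "alive k T \<omega> s = {v \<in> verts T. \<forall>u. prefix u v \<longrightarrow> \<not> (eta \<omega> u k \<le> s)}"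

definition records1 :: "nat \<Rightarrow> ptree \<Rightarrow> (nat list \<times> nat \<Rightarrow> real) \<Rightarrow> nat" where
  "records1 k T \<omega> = card {v \<in> verts T. v \<in> alive k T \<omega> (eta \<omega> v 1)}"

definition a_fun :: "nat \<Rightarrow> ptree \<Rightarrow> (nat list \<times> nat \<Rightarrow> real) \<Rightarrow> real \<Rightarrow> nat" where
  "a_fun k T \<omega> s = card {v \<in> alive k T \<omega> s. Ncount \<omega> v s = 0}"

definition a_int :: "nat \<Rightarrow> ptree \<Rightarrow> (nat list \<times> nat \<Rightarrow> real) \<Rightarrow> real" where
  "a_int k T \<omega> = (LBINT s:{0..}. real (a_fun k T \<omega> s))"

end

theory Submission
  imports Defs
begin

(* Fix the tree. For a vertex v let \<sigma>_v = \<eta>_{v,1} be its first mark and \<tau>_v the least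
   removal time \<eta>_{u,k} of a strict ancestor u. Since k \<ge> 2, v is a 1-record iff
   \<sigma>_v < \<tau>_v, and v contributes min \<sigma>_v \<tau>_v to the integral of a_n. Hence
   X_{k,1} - \<integral>a_n = \<Sum>_v Y_v with Y_v = 1{\<sigma>_v < \<tau>_v} - min \<sigma>_v \<tau>_v, the compensated
   Poisson process N_v(t) - t stopped at time \<tau>_v and at its first jump.
   Conditionally on all other clocks, \<sigma>_v is Exp(1) and \<tau>_v is fixed, so
   E Y_v = 0 and E (Y_v^2 - min \<sigma>_v \<tau>_v) = 0 (optional stopping, here a direct
   computation). For v \<noteq> w one of them, say w, is not an ancestor of the other, so Y_v
   does not depend on \<sigma>_w and E (Y_v Y_w) = 0. Thus E (\<Sum>_v Y_v)^2 = E \<Sum>_v min \<sigma>_v \<tau>_v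
   = E \<integral>a_n for every tree, and averaging over T_n gives the claim. *)

section \<open>Resampling one coordinate of a product of probability spaces\<close>

lemma integral_PiM_resample:
  fixes F :: "('i \<Rightarrow> 'a) \<Rightarrow> 'b::{banach, second_countable_topology}"
  assumes M: "\<And>i. i \<in> I \<Longrightarrow> prob_space (M i)" and j: "j \<in> I"
    and F: "integrable (PiM I M) F"
  shows "integral\<^sup>L (PiM I M) F = (\<integral>X. (\<integral>e. F (X(j := e)) \<partial>M j) \<partial>PiM I M)"
proof -
  interpret Mj: prob_space "M j" using M j .
  interpret PI: prob_space "PiM I M" using M by (rule prob_space_PiM)
  interpret pair_sigma_finite "M j" "PiM I M" ..
  have "(\<lambda>p. (snd p)(j := fst p)) \<in> M j \<Otimes>\<^sub>M PiM I M \<rightarrow>\<^sub>M PiM I M"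
    by (rule measurable_fun_upd[where J=I]) (use j in auto)
  then have [measurable]: "(\<lambda>(e, X). X(j := e)) \<in> M j \<Otimes>\<^sub>M PiM I M \<rightarrow>\<^sub>M PiM I M"
    by (simp add: case_prod_beta')
  have distr: "distr (M j \<Otimes>\<^sub>M PiM I M) (PiM I M) (\<lambda>(e, X). X(j := e)) = PiM I M"
    using distr_pair_PiM_eq_PiM[of I M j] M j by (simp add: insert_absorb)
  have [measurable]: "F \<in> borel_measurable (PiM I M)"
    using F by simp
  have "integrable (M j \<Otimes>\<^sub>M PiM I M) (\<lambda>(e, X). F (X(j := e)))"
    using F by (subst (asm) distr[symmetric]) (simp add: integrable_distr_eq case_prod_beta')
  note Fubini = integral_snd[OF this]
  have "integral\<^sup>L (PiM I M) F = (\<integral>p. F ((\<lambda>(e, X). X(j := e)) p) \<partial>(M j \<Otimes>\<^sub>M PiM I M))"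
    by (subst distr[symmetric]) (simp add: integral_distr)
  also have "\<dots> = (\<integral>X. (\<integral>e. F (X(j := e)) \<partial>M j) \<partial>PiM I M)"
    using Fubini by (simp add: case_prod_beta')
  finally show ?thesis .
qed

lemma integrable_PiM_component:
  assumes M: "\<And>i. i \<in> I \<Longrightarrow> prob_space (M i)" and j: "j \<in> I"
    and f: "integrable (M j) (f :: _ \<Rightarrow> 'b::{banach, second_countable_topology})"
  shows "integrable (PiM I M) (\<lambda>X. f (X j))"
proof -
  have [measurable]: "f \<in> borel_measurable (M j)" using f by simp
  have "distr (PiM I M) (M j) (\<lambda>X. X j) = M j"
    by (rule distr_PiM_component[OF M j])
  then have "integrable (distr (PiM I M) (M j) (\<lambda>X. X j)) f"
    using f by simp
  then show ?thesis
    using j by (subst (asm) integrable_distr_eq) auto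
qed

section \<open>The standard exponential distribution\<close>

interpretation exp1: prob_space exp1
  by (simp add: exp1_def prob_space_exponential_density)

lemma sets_exp1[measurable_cong]: "sets exp1 = sets borel"
  by (simp add: exp1_def)

lemma AE_exp1_pos: "AE e in exp1. 0 < e"
  using AE_lborel_singleton[of 0] unfolding exp1_def
  by (subst AE_density) (auto simp: exponential_density_def elim!: eventually_mono)

lemma
  shows integrable_exp1_power: "integrable exp1 (\<lambda>x. x ^ i)"
    and integral_exp1_power: "integral\<^sup>L exp1 (\<lambda>x. x ^ i) = fact i"
proof -
  have "distributed exp1 lborel (\<lambda>x. x) (erlang_density 0 1)"
    by (simp add: distributed_def exp1_def distr_id2)
  from exp1.has_bochner_integral_erlang_ith_moment[OF _ this, of i]
  show "integrable exp1 (\<lambda>x. x ^ i)" "integral\<^sup>L exp1 (\<lambda>x. x ^ i) = fact i"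
    by (simp_all add: has_bochner_integral_iff)
qed

lemma
  fixes p F :: "real \<Rightarrow> real"
  assumes d: "0 \<le> d"
    and F: "\<And>x. (F has_real_derivative (exp (- x) * p x)) (at x)"
    and p: "continuous_on UNIV p"
  shows integrable_exp1_truncated: "integrable exp1 (\<lambda>e. if e < d then p e else 0)"
    and integral_exp1_truncated: "integral\<^sup>L exp1 (\<lambda>e. if e < d then p e else 0) = F d - F 0"
proof -
  have [measurable]: "p \<in> borel_measurable borel"
    using p by (simp add: borel_measurable_continuous_onI)
  have eq: "AE x in lborel. exponential_density 1 x * (if x < d then p x else 0)
      = indicator {0..d} x * (exp (- x) * p x)"
    using AE_lborel_singleton[of d]
    by (auto elim!: eventually_mono simp: exponential_density_def indicator_def)
  have "integrable lborel (\<lambda>x. (exp (- x) * p x) * indicator {0..d} x)"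
    by (rule borel_integrable_atLeastAtMost) (auto intro!: continuous_intros continuous_on_interior[OF p])
  then have "integrable lborel (\<lambda>x. exponential_density 1 x * (if x < d then p x else 0))"
    by (rule integrable_cong_AE_imp) (use eq in \<open>auto simp: mult.commute elim!: eventually_mono\<close>)
  then show "integrable exp1 (\<lambda>e. if e < d then p e else 0)"
    unfolding exp1_def by (subst integrable_density) (auto simp: exponential_density_nonneg)
  have "integral\<^sup>L exp1 (\<lambda>e. if e < d then p e else 0)
      = (\<integral>x. indicator {0..d} x *\<^sub>R (exp (- x) * p x) \<partial>lborel)"
    unfolding exp1_def
    by (subst integral_density) (auto simp: exponential_density_nonneg intro!: integral_cong_AE eq)
  also have "\<dots> = F d - F 0"
    by (rule integral_FTC_atLeastAtMost[OF d])
       (auto intro!: continuous_intros continuous_on_subset[OF p] DERIV_subset[OF F]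
         simp: has_real_derivative_iff_has_vector_derivative[symmetric])
  finally show "integral\<^sup>L exp1 (\<lambda>e. if e < d then p e else 0) = F d - F 0" .
qed

(* For a rate-1 Poisson process N with first jump at e, this is N(t) - t stopped at its
   first jump and at time Min D (never, if D = {}). *)
definition stopped_jump :: "real set \<Rightarrow> real \<Rightarrow> real" where
  "stopped_jump D e = of_bool (\<forall>d\<in>D. e < d) - Min (insert e D)"

lemma stopped_jump_empty: "stopped_jump {} = (\<lambda>e. 1 - e)"
  by (simp add: stopped_jump_def fun_eq_iff)

lemma stopped_jump_nonempty:
  "finite D \<Longrightarrow> D \<noteq> {} \<Longrightarrow> stopped_jump D e = of_bool (e < Min D) - min e (Min D)"
  by (simp add: stopped_jump_def)

lemma integral_stopped_jump:
  assumes D: "finite D" "\<forall>d\<in>D. 0 < d"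
  shows "integral\<^sup>L exp1 (stopped_jump D) = 0"
proof (cases "D = {}")
  case True
  then show ?thesis
    using integrable_exp1_power[of 1] integral_exp1_power[of 1]
    by (simp add: stopped_jump_empty exp1.prob_space)
next
  case False
  define d where "d = Min D"
  have "0 < d" using D False by (simp add: d_def)
  define F where "F x = (x - d) * exp (- x)" for x :: real
  have F': "(F has_real_derivative (exp (- x) * (1 - x + d))) (at x)" for x
    unfolding F_def by (auto intro!: derivative_eq_intros simp: algebra_simps)
  have c: "continuous_on UNIV (\<lambda>x::real. 1 - x + d)"
    by (intro continuous_intros)
  have "stopped_jump D = (\<lambda>e. (if e < d then 1 - e + d else 0) - d)"
    unfolding stopped_jump_nonempty[OF D(1) False] d_def[symmetric] by (auto simp: fun_eq_iff)
  then show ?thesis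
    using integrable_exp1_truncated[OF _ F' c] integral_exp1_truncated[OF _ F' c] \<open>0 < d\<close>
    by (simp add: F_def exp1.prob_space)
qed

lemma integral_stopped_jump_square:
  assumes D: "finite D" "\<forall>d\<in>D. 0 < d"
  shows "integral\<^sup>L exp1 (\<lambda>e. (stopped_jump D e)\<^sup>2 - Min (insert e D)) = 0"
proof (cases "D = {}")
  case True
  have "(\<lambda>e. (stopped_jump D e)\<^sup>2 - Min (insert e D)) = (\<lambda>e. 1 - 3 * e + e ^ 2)"
    using True by (simp add: stopped_jump_empty power2_eq_square algebra_simps)
  then show ?thesis
    using integrable_exp1_power[of 1] integral_exp1_power[of 1]
      integrable_exp1_power[of 2] integral_exp1_power[of 2]
    by (simp add: numeral_2_eq_2 exp1.prob_space)
next
  case False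
  define d where "d = Min D"
  have "0 < d" using D False by (simp add: d_def)
  define c where "c = d\<^sup>2 - d"
  define F where "F x = (x - x\<^sup>2 + c) * exp (- x)" for x :: real
  have F': "(F has_real_derivative (exp (- x) * (1 - 3 * x + x\<^sup>2 - c))) (at x)" for x
    unfolding F_def by (auto intro!: derivative_eq_intros simp: algebra_simps power2_eq_square)
  have p: "continuous_on UNIV (\<lambda>x::real. 1 - 3 * x + x\<^sup>2 - c)"
    by (intro continuous_intros)
  have "(\<lambda>e. (stopped_jump D e)\<^sup>2 - Min (insert e D)) = (\<lambda>e. (if e < d then 1 - 3 * e + e\<^sup>2 - c else 0) + c)"
    unfolding stopped_jump_nonempty[OF D(1) False] Min_insert[OF D(1) False] d_def[symmetric]
    by (auto simp: fun_eq_iff c_def power2_eq_square algebra_simps min_def)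
  then show ?thesis
    using integrable_exp1_truncated[OF _ F' p] integral_exp1_truncated[OF _ F' p] \<open>0 < d\<close>
    by (simp add: F_def c_def power2_eq_square exp1.prob_space)
qed

section \<open>Compensated records of the Poisson clocks\<close>

interpretation PP: prob_space PP
  unfolding PP_def by (intro prob_space_PiM exp1.prob_space_axioms)

lemma AE_PP_pos: "AE \<omega> in PP. \<forall>x. 0 < \<omega> x"
proof -
  have "AE \<omega> in PP. 0 < \<omega> x" for x
    unfolding PP_def by (rule AE_PiM_component) (auto intro: exp1.prob_space_axioms AE_exp1_pos)
  then show ?thesis by (simp add: AE_all_countable)
qed

lemma measurable_PP_component[measurable]: "(\<lambda>\<omega>. \<omega> x) \<in> borel_measurable PP"
  unfolding PP_def by measurable

lemma integrable_PP_component: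
  fixes f :: "real \<Rightarrow> 'b::{banach, second_countable_topology}"
  shows "integrable exp1 f \<Longrightarrow> integrable PP (\<lambda>\<omega>. f (\<omega> x))"
  unfolding PP_def
  by (rule integrable_PiM_component[of UNIV "\<lambda>_. exp1" x f]) (auto intro: exp1.prob_space_axioms)

lemma integral_PP_eq_0_resample:
  fixes F :: "(nat list \<times> nat \<Rightarrow> real) \<Rightarrow> 'b::{banach, second_countable_topology}"
  assumes F: "integrable PP F" and zero: "AE \<omega> in PP. (\<integral>e. F (\<omega> (j := e)) \<partial>exp1) = 0"
  shows "integral\<^sup>L PP F = 0"
proof -
  have "integral\<^sup>L PP F = (\<integral>\<omega>. (\<integral>e. F (\<omega> (j := e)) \<partial>exp1) \<partial>PP)"
    using F unfolding PP_def
    by (intro integral_PiM_resample[of UNIV "\<lambda>_. exp1" j F]) (auto intro: exp1.prob_space_axioms)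
  also have "\<dots> = 0"
    using zero by (rule integral_eq_zero_AE)
  finally show ?thesis .
qed

lemma measurable_arrival[measurable]: "(\<lambda>\<omega>. arrival \<omega> u r) \<in> borel_measurable PP"
  unfolding arrival_def by measurable

lemma arrival_fun_upd_other: "w \<noteq> u \<Longrightarrow> arrival (\<omega> ((w, i) := e)) u r = arrival \<omega> u r"
  by (simp add: arrival_def)

lemma arrival_pos: "\<forall>x. 0 < \<omega> x \<Longrightarrow> 0 < r \<Longrightarrow> 0 < arrival \<omega> u r"
  unfolding arrival_def by (intro sum_pos) auto

lemma finite_strict_prefixes: "finite {u. strict_prefix u v}"
  by (rule finite_subset[of _ "set (prefixes v)"]) auto

(* When all interarrival times are positive (almost surely), these are the removal times
   \<eta>_{u,k} of the strict ancestors u of v, compensated_record is Y_v of the proof idea and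
   unmarked_time is min \<sigma>_v \<tau>_v, the time v spends in T_n(t) with N_v(t) = 0. *)
definition ancestor_removals :: "nat \<Rightarrow> (nat list \<times> nat \<Rightarrow> real) \<Rightarrow> nat list \<Rightarrow> real set" where
  "ancestor_removals k \<omega> v = (\<lambda>u. arrival \<omega> u k) ` {u. strict_prefix u v}"

definition compensated_record :: "nat \<Rightarrow> (nat list \<times> nat \<Rightarrow> real) \<Rightarrow> nat list \<Rightarrow> real" where
  "compensated_record k \<omega> v = stopped_jump (ancestor_removals k \<omega> v) (\<omega> (v, 0))"

definition unmarked_time :: "nat \<Rightarrow> (nat list \<times> nat \<Rightarrow> real) \<Rightarrow> nat list \<Rightarrow> real" where
  "unmarked_time k \<omega> v = Min (insert (\<omega> (v, 0)) (ancestor_removals k \<omega> v))"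

lemma finite_ancestor_removals[simp]: "finite (ancestor_removals k \<omega> v)"
  by (simp add: ancestor_removals_def finite_strict_prefixes)

lemma ancestor_removals_pos:
  "0 < k \<Longrightarrow> \<forall>x. 0 < \<omega> x \<Longrightarrow> \<forall>d\<in>ancestor_removals k \<omega> v. 0 < d"
  by (auto simp: ancestor_removals_def arrival_pos)

lemma ancestor_removals_fun_upd:
  "\<not> strict_prefix w v \<Longrightarrow> ancestor_removals k (\<omega> ((w, i) := e)) v = ancestor_removals k \<omega> v"
  unfolding ancestor_removals_def by (intro image_cong refl) (auto simp: arrival_fun_upd_other)

lemma compensated_record_fun_upd:
  assumes "\<not> strict_prefix w v"
  shows "compensated_record k (\<omega> ((w, 0) := e)) v =
    (if v = w then stopped_jump (ancestor_removals k \<omega> v) e else compensated_record k \<omega> v)"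
  using assms by (simp add: compensated_record_def ancestor_removals_fun_upd)

lemma unmarked_time_fun_upd_self:
  "unmarked_time k (\<omega> ((v, 0) := e)) v = Min (insert e (ancestor_removals k \<omega> v))"
  by (simp add: unmarked_time_def ancestor_removals_fun_upd)

lemma measurable_Min_insert:
  fixes f :: "'a \<Rightarrow> 'b::{second_countable_topology, linorder_topology}"
  assumes "finite S" "f \<in> borel_measurable M" "\<And>u. u \<in> S \<Longrightarrow> g u \<in> borel_measurable M"
  shows "(\<lambda>x. Min (insert (f x) ((\<lambda>u. g u x) ` S))) \<in> borel_measurable M"
proof (cases "S = {}")
  case False
  then have "(\<lambda>x. Min (insert (f x) ((\<lambda>u. g u x) ` S))) = (\<lambda>x. min (f x) (Min ((\<lambda>u. g u x) ` S)))"
    using assms(1) by (simp add: Min_insert)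
  then show ?thesis using assms by simp
qed (use assms in simp)

lemma measurable_unmarked_time[measurable]: "(\<lambda>\<omega>. unmarked_time k \<omega> v) \<in> borel_measurable PP"
  unfolding unmarked_time_def ancestor_removals_def
  by (rule measurable_Min_insert) (auto simp: finite_strict_prefixes)

lemma compensated_record_eq:
  "compensated_record k \<omega> v = of_bool (\<forall>d\<in>ancestor_removals k \<omega> v. \<omega> (v, 0) < d) - unmarked_time k \<omega> v"
  by (simp add: compensated_record_def stopped_jump_def unmarked_time_def)

lemma measurable_compensated_record[measurable]: "(\<lambda>\<omega>. compensated_record k \<omega> v) \<in> borel_measurable PP"
proof -
  have "Measurable.pred PP (\<lambda>\<omega>. \<forall>u\<in>{u. strict_prefix u v}. \<omega> (v, 0) < arrival \<omega> u k)"
    using finite_strict_prefixes by measurable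
  then have [measurable]: "Measurable.pred PP (\<lambda>\<omega>. \<forall>d\<in>ancestor_removals k \<omega> v. \<omega> (v, 0) < d)"
    by (simp add: ancestor_removals_def)
  show ?thesis
    unfolding compensated_record_eq by measurable
qed

lemma unmarked_time_bounds:
  assumes "0 < k" "\<forall>x. 0 < \<omega> x"
  shows "0 < unmarked_time k \<omega> v" "unmarked_time k \<omega> v \<le> \<omega> (v, 0)"
  using assms ancestor_removals_pos[OF assms] by (auto simp: unmarked_time_def)

lemma abs_compensated_record_le:
  assumes "0 < k" "\<forall>x. 0 < \<omega> x"
  shows "\<bar>compensated_record k \<omega> v\<bar> \<le> 1 + \<omega> (v, 0)"
  using unmarked_time_bounds[OF assms, of v] unfolding compensated_record_eq by auto

lemma integrable_unmarked_time:
  assumes k: "0 < k"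
  shows "integrable PP (\<lambda>\<omega>. unmarked_time k \<omega> v)"
proof (rule Bochner_Integration.integrable_bound[OF integrable_PP_component[OF integrable_exp1_power[of 1]]])
  show "AE \<omega> in PP. norm (unmarked_time k \<omega> v) \<le> norm ((\<omega> (v, 0)) ^ 1)"
    using AE_PP_pos
  proof eventually_elim
    case (elim \<omega>)
    then show ?case using unmarked_time_bounds[OF k elim, of v] by simp
  qed
qed measurable

lemma abs_mult_le_sum_squares:
  fixes a b x y :: real
  assumes "\<bar>a\<bar> \<le> x" "\<bar>b\<bar> \<le> y"
  shows "\<bar>a * b\<bar> \<le> x\<^sup>2 + y\<^sup>2"
proof -
  have "\<bar>a * b\<bar> \<le> x * y"
    using assms by (simp add: abs_mult mult_mono)
  moreover have "0 \<le> x * y"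
    using assms by simp
  ultimately show ?thesis
    using sum_squares_bound[of x y] by linarith
qed

lemma integrable_compensated_record_mult:
  assumes k: "0 < k"
  shows "integrable PP (\<lambda>\<omega>. compensated_record k \<omega> v * compensated_record k \<omega> w)"
proof -
  have "integrable exp1 (\<lambda>e. (1 + e)\<^sup>2)"
    using integrable_exp1_power[of 1] integrable_exp1_power[of 2]
    by (simp add: power2_sum)
  then have int: "integrable PP (\<lambda>\<omega>. (1 + \<omega> x)\<^sup>2)" for x
    by (rule integrable_PP_component)
  show ?thesis
  proof (rule Bochner_Integration.integrable_bound[OF Bochner_Integration.integrable_add[OF int[of "(v, 0)"] int[of "(w, 0)"]]])
    show "AE \<omega> in PP. norm (compensated_record k \<omega> v * compensated_record k \<omega> w)
        \<le> norm ((1 + \<omega> (v, 0))\<^sup>2 + (1 + \<omega> (w, 0))\<^sup>2)"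
      using AE_PP_pos
    proof eventually_elim
      case (elim \<omega>)
      have "\<bar>compensated_record k \<omega> v * compensated_record k \<omega> w\<bar>
          \<le> (1 + \<omega> (v, 0))\<^sup>2 + (1 + \<omega> (w, 0))\<^sup>2"
        by (intro abs_mult_le_sum_squares abs_compensated_record_le[OF k elim])
      then show ?case
        by (metis abs_ge_self order_trans real_norm_def)
    qed
  qed measurable
qed

lemma integral_compensated_record_mult_eq_0:
  assumes k: "0 < k" and "v \<noteq> w" "\<not> strict_prefix w v"
  shows "integral\<^sup>L PP (\<lambda>\<omega>. compensated_record k \<omega> v * compensated_record k \<omega> w) = 0"
proof (rule integral_PP_eq_0_resample[OF integrable_compensated_record_mult[OF k]])
  show "AE \<omega> in PP. (\<integral>e. compensated_record k (\<omega> ((w, 0) := e)) v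
      * compensated_record k (\<omega> ((w, 0) := e)) w \<partial>exp1) = 0"
    using AE_PP_pos
  proof eventually_elim
    case (elim \<omega>)
    have "(\<integral>e. compensated_record k (\<omega> ((w, 0) := e)) v * compensated_record k (\<omega> ((w, 0) := e)) w \<partial>exp1)
        = compensated_record k \<omega> v * integral\<^sup>L exp1 (stopped_jump (ancestor_removals k \<omega> w))"
      using assms by (simp add: compensated_record_fun_upd)
    also have "\<dots> = 0"
      using integral_stopped_jump ancestor_removals_pos[OF k elim] by simp
    finally show ?case .
  qed
qed

lemma integral_compensated_record_square:
  assumes k: "0 < k"
  shows "integral\<^sup>L PP (\<lambda>\<omega>. (compensated_record k \<omega> v)\<^sup>2) = integral\<^sup>L PP (\<lambda>\<omega>. unmarked_time k \<omega> v)"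
proof -
  have "integral\<^sup>L PP (\<lambda>\<omega>. (compensated_record k \<omega> v)\<^sup>2 - unmarked_time k \<omega> v) = 0"
  proof (rule integral_PP_eq_0_resample)
    show "integrable PP (\<lambda>\<omega>. (compensated_record k \<omega> v)\<^sup>2 - unmarked_time k \<omega> v)"
      using integrable_compensated_record_mult[OF k, of v v] integrable_unmarked_time[OF k, of v]
      by (simp add: power2_eq_square)
    show "AE \<omega> in PP. (\<integral>e. (compensated_record k (\<omega> ((v, 0) := e)) v)\<^sup>2
        - unmarked_time k (\<omega> ((v, 0) := e)) v \<partial>exp1) = 0"
      using AE_PP_pos
    proof eventually_elim
      case (elim \<omega>)
      show ?case
        using integral_stopped_jump_square ancestor_removals_pos[OF k elim]
        by (simp add: compensated_record_fun_upd unmarked_time_fun_upd_self)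
    qed
  qed
  then show ?thesis
    using integrable_compensated_record_mult[OF k, of v v] integrable_unmarked_time[OF k, of v]
    by (simp add: power2_eq_square)
qed

lemma integral_sum_compensated_record_square:
  assumes k: "0 < k" and V: "finite V"
  shows "integral\<^sup>L PP (\<lambda>\<omega>. (\<Sum>v\<in>V. compensated_record k \<omega> v)\<^sup>2)
    = integral\<^sup>L PP (\<lambda>\<omega>. \<Sum>v\<in>V. unmarked_time k \<omega> v)"
proof -
  have orth: "integral\<^sup>L PP (\<lambda>\<omega>. compensated_record k \<omega> v * compensated_record k \<omega> w)
      = (if v = w then integral\<^sup>L PP (\<lambda>\<omega>. unmarked_time k \<omega> v) else 0)" for v w
  proof (cases "v = w")
    case True
    then show ?thesis using integral_compensated_record_square[OF k, of v] by (simp add: power2_eq_square)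
  next
    case False
    then consider "\<not> strict_prefix w v" | "\<not> strict_prefix v w"
      using prefix_order.less_asym by blast
    then show ?thesis
    proof cases
      case 1
      then show ?thesis using integral_compensated_record_mult_eq_0[OF k False] False by simp
    next
      case 2
      then show ?thesis using integral_compensated_record_mult_eq_0[OF k False[symmetric]] False
        by (simp add: mult.commute)
    qed
  qed
  have "integral\<^sup>L PP (\<lambda>\<omega>. (\<Sum>v\<in>V. compensated_record k \<omega> v)\<^sup>2)
      = (\<Sum>v\<in>V. \<Sum>w\<in>V. integral\<^sup>L PP (\<lambda>\<omega>. compensated_record k \<omega> v * compensated_record k \<omega> w))"
    using integrable_compensated_record_mult[OF k]
    by (simp add: power2_eq_square sum_product integral_sum integrable_sum)
  also have "\<dots> = (\<Sum>v\<in>V. integral\<^sup>L PP (\<lambda>\<omega>. unmarked_time k \<omega> v))"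
    using V by (simp add: orth)
  also have "\<dots> = integral\<^sup>L PP (\<lambda>\<omega>. \<Sum>v\<in>V. unmarked_time k \<omega> v)"
    using integrable_unmarked_time[OF k] by (simp add: integral_sum)
  finally show ?thesis .
qed

section \<open>Records and the integral of a_n in terms of the clocks\<close>

lemma finite_verts: "finite (verts T)"
proof (induction T)
  case (Node ts)
  then show ?case by (auto intro: nth_mem)
qed

lemma real_card_Collect_eq_sum: "finite A \<Longrightarrow> real (card {x\<in>A. P x}) = (\<Sum>x\<in>A. of_bool (P x))"
  by (simp add: Collect_conj_eq Int_commute)

lemma arrival_Suc: "arrival \<omega> v (Suc r) = arrival \<omega> v r + \<omega> (v, r)"
  by (simp add: arrival_def)

lemma strict_mono_arrival: "\<forall>x. 0 < \<omega> x \<Longrightarrow> strict_mono (arrival \<omega> v)"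
  by (rule strict_mono_Suc_iff[THEN iffD2]) (simp add: arrival_Suc)

lemma
  assumes "\<forall>x. 0 < \<omega> x"
  shows arrival_le_iff: "arrival \<omega> v i \<le> arrival \<omega> v j \<longleftrightarrow> i \<le> j"
    and arrival_less_iff: "arrival \<omega> v i < arrival \<omega> v j \<longleftrightarrow> i < j"
  using strict_mono_arrival[OF assms] by (simp_all add: strict_mono_less_eq strict_mono_less)

lemma Ncount_eq_iff:
  assumes pos: "\<forall>x. 0 < \<omega> x" and r: "1 \<le> r"
  shows "Ncount \<omega> v t = r \<longleftrightarrow> arrival \<omega> v r \<le> t \<and> t < arrival \<omega> v (Suc r)"
proof -
  define A where "A = {j. 1 \<le> j \<and> arrival \<omega> v j \<le> t}"
  have N: "Ncount \<omega> v t = card A"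
    by (simp add: Ncount_def A_def)
  have below: "card A < r" if "t < arrival \<omega> v r"
  proof -
    have "A \<subseteq> {1..<r}"
      using that arrival_le_iff[OF pos, of v r] by (auto simp: A_def) (meson order.trans not_le)
    then have "card A \<le> card {1..<r}"
      by (rule card_mono[OF finite_atLeastLessThan])
    then show ?thesis
      using r by simp
  qed
  have above: "card A \<noteq> r" if "arrival \<omega> v (Suc r) \<le> t"
  proof
    assume "card A = r"
    then have "finite A" using r by (intro card_ge_0_finite) simp
    moreover have "{1..Suc r} \<subseteq> A"
    proof
      fix j assume j: "j \<in> {1..Suc r}"
      then have "arrival \<omega> v j \<le> arrival \<omega> v (Suc r)"
        by (simp add: arrival_le_iff[OF pos])
      then show "j \<in> A"
        using that j by (simp add: A_def)
    qed
    ultimately have "card {1..Suc r} \<le> card A"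
      by (rule card_mono)
    moreover have "card {1..Suc r} = Suc r"
      by simp
    ultimately show False
      using \<open>card A = r\<close> by linarith
  qed
  have between: "A = {1..r}" if "arrival \<omega> v r \<le> t" "t < arrival \<omega> v (Suc r)"
  proof -
    have "arrival \<omega> v j \<le> t \<longleftrightarrow> j \<le> r" for j
    proof
      assume "arrival \<omega> v j \<le> t"
      then have "arrival \<omega> v j < arrival \<omega> v (Suc r)" using that by linarith
      then show "j \<le> r" by (simp add: arrival_less_iff[OF pos])
    next
      assume "j \<le> r"
      then have "arrival \<omega> v j \<le> arrival \<omega> v r" by (simp add: arrival_le_iff[OF pos])
      then show "arrival \<omega> v j \<le> t" using that by linarith
    qed
    then show ?thesis
      unfolding A_def atLeastAtMost_def atLeast_def atMost_def by auto
  qed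
  show ?thesis
  proof
    assume "Ncount \<omega> v t = r"
    then have "card A = r"
      using N by simp
    then show "arrival \<omega> v r \<le> t \<and> t < arrival \<omega> v (Suc r)"
      using below above by (meson less_irrefl not_le)
  next
    assume "arrival \<omega> v r \<le> t \<and> t < arrival \<omega> v (Suc r)"
    then show "Ncount \<omega> v t = r"
      using between N by simp
  qed
qed

lemma first_arrival_less:
  assumes "\<forall>x. 0 < \<omega> x" "2 \<le> k"
  shows "\<omega> (v, 0) < arrival \<omega> v k"
proof -
  have "arrival \<omega> v 1 < arrival \<omega> v k"
    using assms by (simp add: arrival_less_iff)
  then show ?thesis by (simp add: arrival_def)
qed

lemma eta_eq_arrival:
  assumes pos: "\<forall>x. 0 < \<omega> x" and r: "1 \<le> r"
  shows "eta \<omega> v r = arrival \<omega> v r"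
  unfolding eta_def
proof (rule cInf_eq_minimum)
  show "arrival \<omega> v r \<in> {t. Ncount \<omega> v t = r}"
    by (simp add: Ncount_eq_iff[OF pos r] arrival_less_iff[OF pos])
qed (simp add: Ncount_eq_iff[OF pos r])

(* The bound on t matters: Ncount is the card of a set, which is 0 also when infinitely
   many arrivals precede t. *)
lemma Ncount_eq_0_iff:
  assumes pos: "\<forall>x. 0 < \<omega> x" and t: "t < arrival \<omega> v k"
  shows "Ncount \<omega> v t = 0 \<longleftrightarrow> t < \<omega> (v, 0)"
proof -
  define A where "A = {j. 1 \<le> j \<and> arrival \<omega> v j \<le> t}"
  have "A \<subseteq> {..<k}"
    using t by (auto simp: A_def) (meson arrival_le_iff[OF pos] not_le order.strict_trans1)
  then have "finite A" by (rule finite_subset) simp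
  moreover have "Ncount \<omega> v t = card A"
    by (simp add: Ncount_def A_def)
  ultimately have "Ncount \<omega> v t = 0 \<longleftrightarrow> A = {}"
    by simp
  also have "\<dots> \<longleftrightarrow> \<not> arrival \<omega> v 1 \<le> t"
    using arrival_le_iff[OF pos, of v 1] by (auto simp: A_def intro: order_trans)
  finally show ?thesis by (simp add: arrival_def not_le)
qed

lemma all_prefix_iff: "(\<forall>u. prefix u v \<longrightarrow> P u) \<longleftrightarrow> P v \<and> (\<forall>u. strict_prefix u v \<longrightarrow> P u)"
  by (metis prefix_order.le_less prefix_order.order_refl)

lemma mem_alive_iff:
  assumes pos: "\<forall>x. 0 < \<omega> x" and k: "1 \<le> k"
  shows "v \<in> alive k T \<omega> s \<longleftrightarrow>
    v \<in> verts T \<and> s < arrival \<omega> v k \<and> (\<forall>d\<in>ancestor_removals k \<omega> v. s < d)"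
proof -
  have "v \<in> alive k T \<omega> s \<longleftrightarrow> v \<in> verts T \<and> (\<forall>u. prefix u v \<longrightarrow> s < arrival \<omega> u k)"
    by (simp add: alive_def eta_eq_arrival[OF pos k] not_le)
  then show ?thesis
    by (simp add: all_prefix_iff ancestor_removals_def)
qed

lemma eta_1: "\<forall>x. 0 < \<omega> x \<Longrightarrow> eta \<omega> v 1 = \<omega> (v, 0)"
  by (simp add: eta_eq_arrival arrival_def)

lemma records1_eq:
  assumes pos: "\<forall>x. 0 < \<omega> x" and k: "2 \<le> k"
  shows "real (records1 k T \<omega>) = (\<Sum>v\<in>verts T. of_bool (\<forall>d\<in>ancestor_removals k \<omega> v. \<omega> (v, 0) < d))"
proof -
  have "v \<in> alive k T \<omega> (eta \<omega> v 1) \<longleftrightarrow> v \<in> verts T \<and> (\<forall>d\<in>ancestor_removals k \<omega> v. \<omega> (v, 0) < d)" for v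
    unfolding eta_1[OF pos] using first_arrival_less[OF pos k, of v] k by (simp add: mem_alive_iff[OF pos])
  then have "{v \<in> verts T. v \<in> alive k T \<omega> (eta \<omega> v 1)} = {v \<in> verts T. \<forall>d\<in>ancestor_removals k \<omega> v. \<omega> (v, 0) < d}"
    by blast
  then show ?thesis
    unfolding records1_def by (simp add: real_card_Collect_eq_sum finite_verts)
qed

lemma a_fun_eq:
  assumes pos: "\<forall>x. 0 < \<omega> x" and k: "2 \<le> k"
  shows "real (a_fun k T \<omega> s) = (\<Sum>v\<in>verts T. of_bool (s < unmarked_time k \<omega> v))"
proof -
  have "v \<in> alive k T \<omega> s \<and> Ncount \<omega> v s = 0 \<longleftrightarrow> v \<in> verts T \<and> s < unmarked_time k \<omega> v" for v
  proof -
    have "s < unmarked_time k \<omega> v \<longleftrightarrow> s < \<omega> (v, 0) \<and> (\<forall>d\<in>ancestor_removals k \<omega> v. s < d)"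
      by (simp add: unmarked_time_def)
    moreover have "s < \<omega> (v, 0) \<Longrightarrow> s < arrival \<omega> v k"
      using first_arrival_less[OF pos k, of v] by linarith
    moreover have "v \<in> alive k T \<omega> s \<longleftrightarrow>
        v \<in> verts T \<and> s < arrival \<omega> v k \<and> (\<forall>d\<in>ancestor_removals k \<omega> v. s < d)"
      using k by (simp add: mem_alive_iff[OF pos])
    ultimately show ?thesis
      using Ncount_eq_0_iff[OF pos, of s v k] by blast
  qed
  then have "{v \<in> alive k T \<omega> s. Ncount \<omega> v s = 0} = {v \<in> verts T. s < unmarked_time k \<omega> v}"
    by blast
  then show ?thesis
    unfolding a_fun_def by (simp add: real_card_Collect_eq_sum finite_verts)
qed

lemma a_int_eq:
  assumes pos: "\<forall>x. 0 < \<omega> x" and k: "2 \<le> k"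
  shows "a_int k T \<omega> = (\<Sum>v\<in>verts T. unmarked_time k \<omega> v)"
proof -
  have M: "0 \<le> unmarked_time k \<omega> v" for v
    using unmarked_time_bounds(1)[OF _ pos, of k v] k by simp
  have "a_int k T \<omega> = (\<integral>s. (\<Sum>v\<in>verts T. indicator {0..<unmarked_time k \<omega> v} s) \<partial>lborel)"
    unfolding a_int_def set_lebesgue_integral_def
    by (intro Bochner_Integration.integral_cong refl)
       (simp add: a_fun_eq[OF pos k] sum_distrib_left indicator_def of_bool_def)
  also have "\<dots> = (\<Sum>v\<in>verts T. (\<integral>s. indicator {0..<unmarked_time k \<omega> v} s \<partial>lborel))"
    by (rule Bochner_Integration.integral_sum) (use M in \<open>auto intro!: integrable_real_indicator\<close>)
  also have "\<dots> = (\<Sum>v\<in>verts T. unmarked_time k \<omega> v)"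
    using M by simp
  finally show ?thesis .
qed

lemma records1_minus_a_int_eq:
  assumes "\<forall>x. 0 < \<omega> x" "2 \<le> k"
  shows "real (records1 k T \<omega>) - a_int k T \<omega> = (\<Sum>v\<in>verts T. compensated_record k \<omega> v)"
  by (simp add: records1_eq[OF assms] a_int_eq[OF assms] compensated_record_eq sum_subtractf)

section \<open>Measurability of the record count and of the integral of a_n\<close>

(* Needed for every \<omega>, not just almost surely: integral_cong_AE requires measurable
   functions. The difficulty is eta, an infimum over a level set of Ncount. *)
lemma card_eq_iff_distinct_list:
  "card S = r \<longleftrightarrow> (\<exists>xs. distinct xs \<and> length xs = r \<and> S = set xs) \<or> (r = 0 \<and> (\<forall>xs. \<not> S \<subseteq> set xs))"
proof (cases "finite S")
  case True
  then obtain ys where "distinct ys" "set ys = S"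
    using finite_distinct_list by blast
  then show ?thesis
    by (metis distinct_card order_refl)
next
  case False
  then show ?thesis
    by (auto dest: finite_subset)
qed

lemma measurable_card_Collect_eq:
  fixes P :: "'i::countable \<Rightarrow> 'a \<Rightarrow> bool"
  assumes [measurable]: "\<And>i. Measurable.pred M (P i)"
  shows "Measurable.pred M (\<lambda>x. card {i. P i x} = r)"
proof -
  have "card {i. P i x} = r \<longleftrightarrow> (\<exists>xs. distinct xs \<and> length xs = r \<and> (\<forall>i. P i x \<longleftrightarrow> i \<in> set xs))
      \<or> (r = 0 \<and> (\<forall>xs. \<exists>i. P i x \<and> i \<notin> set xs))" for x
    unfolding card_eq_iff_distinct_list by (auto simp: set_eq_iff subset_iff)
  moreover have "Measurable.pred M (\<lambda>x. (\<exists>xs. distinct xs \<and> length xs = r \<and> (\<forall>i. P i x \<longleftrightarrow> i \<in> set xs))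
      \<or> (r = 0 \<and> (\<forall>xs. \<exists>i. P i x \<and> i \<notin> set xs)))"
    by measurable
  ultimately show ?thesis
    by simp
qed

lemma pred_borel_le[measurable (raw)]:
  fixes f g :: "'a \<Rightarrow> 'b::{second_countable_topology, linorder_topology}"
  shows "f \<in> borel_measurable M \<Longrightarrow> g \<in> borel_measurable M \<Longrightarrow> Measurable.pred M (\<lambda>x. f x \<le> g x)"
  unfolding pred_def by (rule borel_measurable_le)

lemma measurable_Ncount_eq[measurable (raw)]:
  assumes [measurable]: "f \<in> M \<rightarrow>\<^sub>M PP" "g \<in> borel_measurable M"
  shows "Measurable.pred M (\<lambda>x. Ncount (f x) u (g x) = r)"
  unfolding Ncount_def by (rule measurable_card_Collect_eq) measurable

lemma Ncount_level_set_least_arrival: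
  assumes r: "1 \<le> r" and t: "Ncount \<omega> u t = r"
  obtains j where "1 \<le> j" "Ncount \<omega> u (arrival \<omega> u j) = r"
    "\<And>t'. Ncount \<omega> u t' = r \<Longrightarrow> arrival \<omega> u j \<le> t'"
proof -
  define S where "S t' = {j. 1 \<le> j \<and> arrival \<omega> u j \<le> t'}" for t'
  have N: "Ncount \<omega> u t' = card (S t')" for t'
    by (simp add: Ncount_def S_def)
  have "card (S t) = r"
    using t N by simp
  then have fin: "finite (S t)" and ne: "S t \<noteq> {}"
    using r by (auto intro: card_ge_0_finite)
  have "Max (arrival \<omega> u ` S t) \<in> arrival \<omega> u ` S t"
    using fin ne by simp
  then obtain j where j_in: "j \<in> S t" and j_max: "arrival \<omega> u j = Max (arrival \<omega> u ` S t)"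
    by (metis imageE)
  have j: "j \<in> S t" "\<And>i. i \<in> S t \<Longrightarrow> arrival \<omega> u i \<le> arrival \<omega> u j"
    using j_in fin by (simp_all add: j_max)
  have "S (arrival \<omega> u j) = S t"
    using j by (auto simp: S_def intro: order_trans)
  then have level: "Ncount \<omega> u (arrival \<omega> u j) = r"
    using N \<open>card (S t) = r\<close> by simp
  have "arrival \<omega> u j \<le> t'" if "Ncount \<omega> u t' = r" for t'
  proof (rule ccontr)
    assume "\<not> arrival \<omega> u j \<le> t'"
    then have "S t' \<subset> S t"
      using j by (auto simp: S_def intro: order_trans)
    then have "card (S t') < r"
      using psubset_card_mono[OF fin] \<open>card (S t) = r\<close> by simp
    then show False
      using that N by simp
  qed
  moreover have "1 \<le> j"
    using j(1) by (simp add: S_def)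
  ultimately show ?thesis
    using level that by blast
qed

lemma eta_le_iff:
  assumes r: "1 \<le> r"
  shows "eta \<omega> u r \<le> a \<longleftrightarrow>
    (\<exists>j\<ge>1. Ncount \<omega> u (arrival \<omega> u j) = r \<and> arrival \<omega> u j \<le> a) \<or>
    ((\<forall>j\<ge>1. Ncount \<omega> u (arrival \<omega> u j) \<noteq> r) \<and> Inf {} \<le> a)"
proof (cases "\<exists>t. Ncount \<omega> u t = r")
  case True
  then obtain j where j: "1 \<le> j" "Ncount \<omega> u (arrival \<omega> u j) = r"
    "\<And>t'. Ncount \<omega> u t' = r \<Longrightarrow> arrival \<omega> u j \<le> t'"
    using Ncount_level_set_least_arrival[OF r] by metis
  have "eta \<omega> u r = arrival \<omega> u j"
    unfolding eta_def by (rule cInf_eq_minimum) (use j in auto)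
  then show ?thesis
    using j by (auto intro: order_trans)
next
  case False
  then show ?thesis
    by (simp add: eta_def)
qed

lemma measurable_eta[measurable]:
  assumes r: "1 \<le> r"
  shows "(\<lambda>\<omega>. eta \<omega> u r) \<in> borel_measurable PP"
proof (subst borel_measurable_iff_le, intro allI)
  fix a :: real
  have "Measurable.pred PP (\<lambda>\<omega>. eta \<omega> u r \<le> a)"
    unfolding eta_le_iff[OF r] by measurable
  then show "{\<omega> \<in> space PP. eta \<omega> u r \<le> a} \<in> sets PP"
    by (simp add: pred_def)
qed

lemma measurable_records1:
  assumes k: "1 \<le> k"
  shows "(\<lambda>\<omega>. real (records1 k T \<omega>)) \<in> borel_measurable PP"
proof -
  have [measurable]: "(\<lambda>\<omega>. eta \<omega> u k) \<in> borel_measurable PP" "(\<lambda>\<omega>. eta \<omega> u 1) \<in> borel_measurable PP" for u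
    using k by (simp_all add: measurable_eta)
  have "{v \<in> verts T. v \<in> alive k T \<omega> (eta \<omega> v 1)}
      = {v \<in> verts T. \<forall>u. prefix u v \<longrightarrow> \<not> eta \<omega> u k \<le> eta \<omega> v 1}" for \<omega>
    by (auto simp: alive_def)
  then have eq: "(\<lambda>\<omega>. real (records1 k T \<omega>))
      = (\<lambda>\<omega>. \<Sum>v\<in>verts T. of_bool (\<forall>u. prefix u v \<longrightarrow> \<not> eta \<omega> u k \<le> eta \<omega> v 1))"
    unfolding records1_def by (simp only: real_card_Collect_eq_sum finite_verts)
  show ?thesis
    unfolding eq by measurable
qed

lemma measurable_a_int:
  assumes k: "1 \<le> k"
  shows "(\<lambda>\<omega>. a_int k T \<omega>) \<in> borel_measurable PP"
proof -
  have [measurable]: "(\<lambda>\<omega>. eta \<omega> u k) \<in> borel_measurable PP" for u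
    using k by (simp add: measurable_eta)
  have "{v \<in> alive k T \<omega> s. Ncount \<omega> v s = 0}
      = {v \<in> verts T. (\<forall>u. prefix u v \<longrightarrow> \<not> eta \<omega> u k \<le> s) \<and> Ncount \<omega> v s = 0}" for \<omega> s
    by (auto simp: alive_def)
  then have eq: "(\<lambda>(\<omega>, s). indicator {0..} s *\<^sub>R real (a_fun k T \<omega> s)) = (\<lambda>(\<omega>, s). indicator {0..} s *\<^sub>R
      (\<Sum>v\<in>verts T. of_bool ((\<forall>u. prefix u v \<longrightarrow> \<not> eta \<omega> u k \<le> s) \<and> Ncount \<omega> v s = 0) :: real))"
    unfolding a_fun_def by (simp only: real_card_Collect_eq_sum finite_verts)
  have [measurable]: "(\<lambda>(\<omega>, s). indicator {0..} s *\<^sub>R real (a_fun k T \<omega> s)) \<in> borel_measurable (PP \<Otimes>\<^sub>M lborel)"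
    unfolding eq by measurable
  show ?thesis
    unfolding a_int_def set_lebesgue_integral_def by measurable
qed

theorem integral_records1_minus_a_int_square:
  assumes k: "2 \<le> k"
  shows "(\<integral>\<omega>. (real (records1 k T \<omega>) - a_int k T \<omega>)\<^sup>2 \<partial>PP) = (\<integral>\<omega>. a_int k T \<omega> \<partial>PP)"
proof -
  have [measurable]: "(\<lambda>\<omega>. real (records1 k T \<omega>)) \<in> borel_measurable PP"
    "(\<lambda>\<omega>. a_int k T \<omega>) \<in> borel_measurable PP"
    using k by (simp_all add: measurable_records1 measurable_a_int)
  have "(\<integral>\<omega>. (real (records1 k T \<omega>) - a_int k T \<omega>)\<^sup>2 \<partial>PP)
      = (\<integral>\<omega>. (\<Sum>v\<in>verts T. compensated_record k \<omega> v)\<^sup>2 \<partial>PP)"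
    by (intro integral_cong_AE) (use AE_PP_pos in \<open>auto simp: records1_minus_a_int_eq[OF _ k]\<close>)
  also have "\<dots> = (\<integral>\<omega>. (\<Sum>v\<in>verts T. unmarked_time k \<omega> v) \<partial>PP)"
    using k by (intro integral_sum_compensated_record_square finite_verts) simp
  also have "\<dots> = (\<integral>\<omega>. a_int k T \<omega> \<partial>PP)"
    by (intro integral_cong_AE) (use AE_PP_pos in \<open>auto simp: a_int_eq[OF _ k]\<close>)
  finally show ?thesis .
qed

theorem lemma6:
  fixes xi :: "nat pmf" and k n :: nat
  assumes "k \<ge> 2" and "n \<ge> 1"
    and "summable (\<lambda>p. real p * pmf xi p)" and "(\<Sum>p. real p * pmf xi p) = 1"
    and "summable (\<lambda>p. real p * (real p - 1) * pmf xi p)"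
    and "0 < (\<Sum>p. real p * (real p - 1) * pmf xi p)"
    and "0 < (\<Sum>t | tsize t = n. gw_weight xi t)"
  shows "cond_GW_expect xi n
           (\<lambda>T. \<integral>\<omega>. (real (records1 k T \<omega>) - a_int k T \<omega>)^2 \<partial>PP)
       = cond_GW_expect xi n (\<lambda>T. \<integral>\<omega>. a_int k T \<omega> \<partial>PP)"
  \<comment> \<open>The identity holds for every fixed tree.\<close>
  using integral_records1_minus_a_int_square[OF assms(1)] by simp

end
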